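(* Let $E=(d_0,d_1)$ with $-\infty\le d_0<d_1\le\infty$, equipped with Lebesgue measure, and $L^1=L^1(E)$. Let $g\colon E\to\mathbb{R}$ be continuous and strictly positive and let $\varphi\ge0$ be Borel measurable and integrable on compact subsets of $E$. Let $\lambda>0$, $Q_\lambda=\lambda G+Q$ (with $G,Q$ as in the context), and define \[ R_\lambda v(x)=\int_{d_0}^{d_1}\mathbf{1}_{(d_0,x)}(y)\frac{e^{Q_\lambda(y)-Q_\lambda(x)}}{g(x)}v(y)\,dy,\quad v\in L^1,\ x\in E. \] Then $\lambda\|R_\lambda v\|\le\|v\|$ for all $v\in L^1$. Moreover, for every $v\in L^1$ we have $gR_\lambda v\in AC$ and $u=R_\lambda v$ is a solution in $L^1$ of the equation $\lambda u-Au=v$, where $Au=-\frac{d}{dx}(gu)-\varphi u$.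
   Context: $AC$ denotes the space of absolutely continuous functions on $E$. $G(x)=\int_{x_0}^x\frac{dz}{g(z)}$ and $Q(x)=\int_{x_1}^x\frac{\varphi(z)}{g(z)}dz$, where $x_0=d_0$ (resp. $x_1=d_0$) if the corresponding integral is finite for all $x\in E$, and otherwise $x_0$ (resp. $x_1$) is a fixed point of $E$. *)

theory Defs
  imports "HOL-Analysis.Analysis"
begin

definition abs_cont_on_interval :: "real \<Rightarrow> real \<Rightarrow> (real \<Rightarrow> real) \<Rightarrow> bool" where
  "abs_cont_on_interval a b f \<longleftrightarrow>
     (\<forall>\<epsilon>>0. \<exists>\<delta>>0. \<forall>(n::nat) (s::nat \<Rightarrow> real) (t::nat \<Rightarrow> real).
        (\<forall>i<n. a \<le> s i \<and> s i \<le> t i \<and> t i \<le> b) \<and>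
        (\<forall>i<n. \<forall>j<n. i \<noteq> j \<longrightarrow> t i \<le> s j \<or> t j \<le> s i) \<and>
        (\<Sum>i<n. t i - s i) < \<delta>
        \<longrightarrow> (\<Sum>i<n. \<bar>f (t i) - f (s i)\<bar>) < \<epsilon>)"

definition AC_on :: "real set \<Rightarrow> (real \<Rightarrow> real) \<Rightarrow> bool" where
  "AC_on E f \<longleftrightarrow> (\<forall>a b. a \<in> E \<longrightarrow> b \<in> E \<longrightarrow> a \<le> b \<longrightarrow> abs_cont_on_interval a b f)"

definition base_point :: "ereal \<Rightarrow> ereal \<Rightarrow> real \<Rightarrow> (real \<Rightarrow> real) \<Rightarrow> ereal" where
  "base_point d0 d1 c h =
     (if (\<forall>x\<in>einterval d0 d1. interval_lebesgue_integrable lborel d0 (ereal x) h)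
      then d0 else ereal c)"

definition primitive :: "ereal \<Rightarrow> ereal \<Rightarrow> real \<Rightarrow> (real \<Rightarrow> real) \<Rightarrow> real \<Rightarrow> real" where
  "primitive d0 d1 c h x = interval_lebesgue_integral lborel (base_point d0 d1 c h) (ereal x) h"

definition Gfun :: "ereal \<Rightarrow> ereal \<Rightarrow> real \<Rightarrow> (real \<Rightarrow> real) \<Rightarrow> real \<Rightarrow> real" where
  "Gfun d0 d1 x0 g = primitive d0 d1 x0 (\<lambda>z. 1 / g z)"

definition Qfun :: "ereal \<Rightarrow> ereal \<Rightarrow> real \<Rightarrow> (real \<Rightarrow> real) \<Rightarrow> (real \<Rightarrow> real) \<Rightarrow> real \<Rightarrow> real" where
  "Qfun d0 d1 x1 g \<phi> = primitive d0 d1 x1 (\<lambda>z. \<phi> z / g z)"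

definition Qlam :: "ereal \<Rightarrow> ereal \<Rightarrow> real \<Rightarrow> real \<Rightarrow> (real \<Rightarrow> real) \<Rightarrow> (real \<Rightarrow> real) \<Rightarrow> real \<Rightarrow> real \<Rightarrow> real" where
  "Qlam d0 d1 x0 x1 g \<phi> lam x = lam * Gfun d0 d1 x0 g x + Qfun d0 d1 x1 g \<phi> x"

definition Rlam :: "ereal \<Rightarrow> ereal \<Rightarrow> real \<Rightarrow> real \<Rightarrow> (real \<Rightarrow> real) \<Rightarrow> (real \<Rightarrow> real) \<Rightarrow> real
                     \<Rightarrow> (real \<Rightarrow> real) \<Rightarrow> real \<Rightarrow> real" where
  "Rlam d0 d1 x0 x1 g \<phi> lam v x =
     (LINT y:einterval d0 d1|lebesgue.
        indicator (einterval d0 (ereal x)) y *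
        (exp (Qlam d0 d1 x0 x1 g \<phi> lam y - Qlam d0 d1 x0 x1 g \<phi> lam x) / g x) * v y)"

end

theory Submission
  imports Defs
begin

text \<open>Write \<open>Q_lam = \<lambda> G + Q\<close>; it is locally absolutely continuous with density \<open>(\<lambda> + \<phi>) / g\<close>
  and grows at least like \<open>\<lambda> G\<close> because \<open>\<phi> \<ge> 0\<close>. On \<open>E\<close> one has
  \<open>g R\<^sub>\<lambda> v = exp (- Q_lam) F\<close> with \<open>F x = \<integral>\<^sub>d\<^sub>0\<^sup>x exp (Q_lam y) v y dy\<close>, a product of two
  locally absolutely continuous functions, and Lebesgue differentiation of both factors gives
  \<open>(g R\<^sub>\<lambda> v)' = v - (\<lambda> + \<phi>) R\<^sub>\<lambda> v\<close> almost everywhere. For the norm bound, Tonelli's theorem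
  reduces \<open>\<lambda> \<parallel>R\<^sub>\<lambda> v\<parallel> \<le> \<parallel>v\<parallel>\<close> to \<open>\<integral>\<^sub>y\<^sup>d\<^sup>1 exp (Q_lam y - Q_lam x) / g x dx \<le> 1/\<lambda>\<close>, and
  the integrand is at most \<open>exp (- \<lambda> (G x - G y)) / g x\<close>, whose integral is at most \<open>1/\<lambda>\<close>.\<close>

section \<open>Absolute continuity on compact intervals\<close>

definition nonoverlapping_subintervals :: "real \<Rightarrow> real \<Rightarrow> nat \<Rightarrow> (nat \<Rightarrow> real) \<Rightarrow> (nat \<Rightarrow> real) \<Rightarrow> bool" where
  "nonoverlapping_subintervals a b n s t \<longleftrightarrow>
     (\<forall>i<n. a \<le> s i \<and> s i \<le> t i \<and> t i \<le> b) \<and> (\<forall>i<n. \<forall>j<n. i \<noteq> j \<longrightarrow> t i \<le> s j \<or> t j \<le> s i)"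

lemma abs_cont_on_interval_iff:
  "abs_cont_on_interval a b f \<longleftrightarrow>
     (\<forall>e>0. \<exists>d>0. \<forall>n s t. nonoverlapping_subintervals a b n s t \<and> (\<Sum>i<n. t i - s i) < d
        \<longrightarrow> (\<Sum>i<n. \<bar>f (t i) - f (s i)\<bar>) < e)"
  unfolding abs_cont_on_interval_def nonoverlapping_subintervals_def by (simp only: conj_assoc)

lemma abs_cont_on_interval_dominated:
  fixes f g h :: "real \<Rightarrow> real"
  assumes f: "abs_cont_on_interval a b f" and g: "abs_cont_on_interval a b g"
    and "A \<ge> 0" "B \<ge> 0"
    and bound: "\<And>s t. s \<in> {a..b} \<Longrightarrow> t \<in> {a..b} \<Longrightarrow> \<bar>h t - h s\<bar> \<le> A * \<bar>f t - f s\<bar> + B * \<bar>g t - g s\<bar>"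
  shows "abs_cont_on_interval a b h"
  unfolding abs_cont_on_interval_iff
proof (intro allI impI)
  fix e :: real assume "0 < e"
  define e' where "e' = e / (A + B + 1)"
  have "e' > 0" using \<open>0 < e\<close> \<open>A \<ge> 0\<close> \<open>B \<ge> 0\<close> by (simp add: e'_def)
  obtain d1 where "d1 > 0" and d1: "\<And>n s t. nonoverlapping_subintervals a b n s t \<Longrightarrow>
      (\<Sum>i<n. t i - s i) < d1 \<Longrightarrow> (\<Sum>i<n. \<bar>f (t i) - f (s i)\<bar>) < e'"
    using f \<open>e' > 0\<close> unfolding abs_cont_on_interval_iff by meson
  obtain d2 where "d2 > 0" and d2: "\<And>n s t. nonoverlapping_subintervals a b n s t \<Longrightarrow>
      (\<Sum>i<n. t i - s i) < d2 \<Longrightarrow> (\<Sum>i<n. \<bar>g (t i) - g (s i)\<bar>) < e'"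
    using g \<open>e' > 0\<close> unfolding abs_cont_on_interval_iff by meson
  show "\<exists>d>0. \<forall>n s t. nonoverlapping_subintervals a b n s t \<and> (\<Sum>i<n. t i - s i) < d
      \<longrightarrow> (\<Sum>i<n. \<bar>h (t i) - h (s i)\<bar>) < e"
  proof (intro exI[of _ "min d1 d2"] conjI allI impI)
    fix n s t assume st: "nonoverlapping_subintervals a b n s t \<and> (\<Sum>i<n. t i - s i) < min d1 d2"
    have "(\<Sum>i<n. \<bar>h (t i) - h (s i)\<bar>) \<le> (\<Sum>i<n. A * \<bar>f (t i) - f (s i)\<bar> + B * \<bar>g (t i) - g (s i)\<bar>)"
      using st by (intro sum_mono bound) (auto simp: nonoverlapping_subintervals_def)
    also have "\<dots> = A * (\<Sum>i<n. \<bar>f (t i) - f (s i)\<bar>) + B * (\<Sum>i<n. \<bar>g (t i) - g (s i)\<bar>)"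
      by (simp add: sum.distrib sum_distrib_left)
    also have "\<dots> \<le> A * e' + B * e'"
      using d1[of n s t] d2[of n s t] st \<open>A \<ge> 0\<close> \<open>B \<ge> 0\<close> by (intro add_mono mult_left_mono) auto
    also have "\<dots> = (A + B) * e'" by (simp add: algebra_simps)
    also have "\<dots> < (A + B + 1) * e'" using \<open>e' > 0\<close> by simp
    also have "\<dots> = e" using \<open>A \<ge> 0\<close> \<open>B \<ge> 0\<close> by (simp add: e'_def)
    finally show "(\<Sum>i<n. \<bar>h (t i) - h (s i)\<bar>) < e" .
  qed (use \<open>d1 > 0\<close> \<open>d2 > 0\<close> in simp)
qed

lemma abs_cont_on_interval_Lipschitz_image:
  fixes f h :: "real \<Rightarrow> real"
  assumes "abs_cont_on_interval a b f" "L \<ge> 0"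
    and "\<And>s t. s \<in> {a..b} \<Longrightarrow> t \<in> {a..b} \<Longrightarrow> \<bar>h t - h s\<bar> \<le> L * \<bar>f t - f s\<bar>"
  shows "abs_cont_on_interval a b h"
  by (rule abs_cont_on_interval_dominated[OF assms(1,1,2) order_refl]) (use assms(3) in simp)

lemma abs_cont_on_interval_cong:
  assumes "abs_cont_on_interval a b f" "\<And>x. x \<in> {a..b} \<Longrightarrow> f x = h x"
  shows "abs_cont_on_interval a b h"
  by (rule abs_cont_on_interval_Lipschitz_image[OF assms(1), of 1]) (simp_all add: assms(2))

lemma abs_cont_on_interval_mult:
  fixes f g :: "real \<Rightarrow> real"
  assumes f: "abs_cont_on_interval a b f" and g: "abs_cont_on_interval a b g" and "a \<le> b"
    and bounded: "\<And>x. x \<in> {a..b} \<Longrightarrow> \<bar>f x\<bar> \<le> M \<and> \<bar>g x\<bar> \<le> M"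
  shows "abs_cont_on_interval a b (\<lambda>x. f x * g x)"
proof (rule abs_cont_on_interval_dominated[OF g f])
  show "0 \<le> M" using bounded[of a] \<open>a \<le> b\<close> by auto
  then show "0 \<le> M" .
  fix s t assume st: "s \<in> {a..b}" "t \<in> {a..b}"
  have "\<bar>f t * g t - f s * g s\<bar> = \<bar>f t * (g t - g s) + g s * (f t - f s)\<bar>"
    by (simp add: algebra_simps)
  also have "\<dots> \<le> \<bar>f t\<bar> * \<bar>g t - g s\<bar> + \<bar>g s\<bar> * \<bar>f t - f s\<bar>"
    by (metis abs_mult abs_triangle_ineq)
  also have "\<dots> \<le> M * \<bar>g t - g s\<bar> + M * \<bar>f t - f s\<bar>"
    using bounded st by (intro add_mono mult_right_mono) auto
  finally show "\<bar>f t * g t - f s * g s\<bar> \<le> M * \<bar>g t - g s\<bar> + M * \<bar>f t - f s\<bar>" .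
qed

lemma exp_diff_le_Lipschitz:
  fixes x y M :: real
  assumes "x \<le> M" "y \<le> M"
  shows "\<bar>exp x - exp y\<bar> \<le> exp M * \<bar>x - y\<bar>"
proof -
  have ordered: "exp u - exp v \<le> exp M * (u - v)" if "v \<le> u" "u \<le> M" for u v :: real
  proof -
    have "exp u - exp v = exp u * (1 - exp (-(u - v)))"
      by (simp add: right_diff_distrib flip: exp_add)
    also have "\<dots> \<le> exp u * (u - v)"
      using exp_ge_add_one_self[of "-(u - v)"] by (intro mult_left_mono) (linarith, simp)
    also have "\<dots> \<le> exp M * (u - v)" using that by (intro mult_right_mono) auto
    finally show ?thesis .
  qed
  show ?thesis
  proof (cases "y \<le> x")
    case True
    then show ?thesis using ordered[of y x] assms by simp
  next
    case False
    then show ?thesis using ordered[of x y] assms by (simp add: abs_minus_commute)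
  qed
qed

lemma sum_indicator_disjoint_Ioc_le_1:
  fixes s t :: "nat \<Rightarrow> real"
  assumes "\<forall>i<n. \<forall>j<n. i \<noteq> j \<longrightarrow> t i \<le> s j \<or> t j \<le> s i"
  shows "(\<Sum>i<n. indicator {s i<..t i} x) \<le> (1::real)"
proof (cases "\<exists>i<n. x \<in> {s i<..t i}")
  case True
  then obtain i where i: "i < n" "x \<in> {s i<..t i}" by blast
  have "(\<Sum>j<n. indicator {s j<..t j} x) = (\<Sum>j\<in>{i}. indicator {s j<..t j} x :: real)"
  proof (rule sum.mono_neutral_right)
    show "\<forall>j\<in>{..<n} - {i}. indicator {s j<..t j} x = (0::real)"
      using assms i by (fastforce simp: indicator_def)
  qed (use i in auto)
  then show ?thesis by simp
next
  case False
  then have "(\<Sum>i<n. indicator {s i<..t i} x) = (0::real)"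
    by (intro sum.neutral) (auto simp: indicator_def)
  then show ?thesis by simp
qed

lemma indicator_sum_nonoverlapping_subintervals:
  assumes "nonoverlapping_subintervals a b n s t"
  shows "integrable lebesgue (\<lambda>x. \<Sum>i<n. indicator {s i<..t i} x :: real)"
    "integral\<^sup>L lebesgue (\<lambda>x. \<Sum>i<n. indicator {s i<..t i} x :: real) = (\<Sum>i<n. t i - s i)"
    "0 \<le> (\<Sum>i<n. indicator {s i<..t i} x :: real)" "(\<Sum>i<n. indicator {s i<..t i} x :: real) \<le> 1"
proof -
  have interval: "integrable lebesgue (indicat_real {s i<..t i})" for i
    by (cases "s i \<le> t i") (auto simp: emeasure_completion)
  then show "integrable lebesgue (\<lambda>x. \<Sum>i<n. indicator {s i<..t i} x :: real)"
    by (intro Bochner_Integration.integrable_sum)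
  have "integral\<^sup>L lebesgue (\<lambda>x. \<Sum>i<n. indicator {s i<..t i} x :: real) =
      (\<Sum>i<n. integral\<^sup>L lebesgue (indicat_real {s i<..t i}))"
    by (intro Bochner_Integration.integral_sum interval)
  also have "\<dots> = (\<Sum>i<n. t i - s i)"
    using assms by (intro sum.cong refl) (simp add: measure_completion nonoverlapping_subintervals_def)
  finally show "integral\<^sup>L lebesgue (\<lambda>x. \<Sum>i<n. indicator {s i<..t i} x :: real) = (\<Sum>i<n. t i - s i)" .
  show "0 \<le> (\<Sum>i<n. indicator {s i<..t i} x :: real)" by (intro sum_nonneg) simp
  show "(\<Sum>i<n. indicator {s i<..t i} x :: real) \<le> 1"
    using assms by (intro sum_indicator_disjoint_Ioc_le_1) (simp add: nonoverlapping_subintervals_def)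
qed

lemma integral_truncation_tendsto:
  fixes k :: "'a \<Rightarrow> real"
  assumes k: "integrable M k" "\<And>x. 0 \<le> k x"
  shows "integrable M (\<lambda>x. min (k x) (real n))"
    "(\<lambda>n. integral\<^sup>L M (\<lambda>x. min (k x) (real n))) \<longlonglongrightarrow> integral\<^sup>L M k"
proof -
  have k_meas: "k \<in> borel_measurable M" using k(1) by auto
  have "(\<lambda>n. min (k x) (real n)) \<longlonglongrightarrow> k x" for x
  proof -
    have "\<forall>n\<ge>nat \<lceil>k x\<rceil>. min (k x) (real n) = k x" by linarith
    then have "eventually (\<lambda>n. min (k x) (real n) = k x) sequentially"
      unfolding eventually_sequentially by blast
    then show ?thesis by (rule tendsto_eventually)
  qed
  moreover have "AE x in M. norm (min (k x) (real n)) \<le> k x" for n using k(2) by auto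
  ultimately show "integrable M (\<lambda>x. min (k x) (real n))"
    "(\<lambda>n. integral\<^sup>L M (\<lambda>x. min (k x) (real n))) \<longlonglongrightarrow> integral\<^sup>L M k"
    using k_meas k(1) by (auto intro: integrable_dominated_convergence2 integral_dominated_convergence)
qed

text \<open>Absolute continuity of the integral, phrased for weights \<open>0 \<le> J \<le> 1\<close> (below: sums of
  indicators of non-overlapping intervals) rather than for sets. Truncating \<open>k\<close> at a height \<open>N\<close>
  leaves a tail of small integral, and the truncation contributes at most \<open>N \<integral> J\<close>.\<close>

lemma integral_small_weight:
  fixes k :: "'a \<Rightarrow> real"
  assumes k: "integrable M k" "\<And>x. 0 \<le> k x" and "0 < e"
  shows "\<exists>d>0. \<forall>J. J \<in> borel_measurable M \<longrightarrow> integrable M J \<longrightarrow> (\<forall>x. 0 \<le> J x \<and> J x \<le> 1) \<longrightarrow>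
       integral\<^sup>L M J < d \<longrightarrow> integral\<^sup>L M (\<lambda>x. J x * k x) < e"
proof -
  define kn where "kn n x = min (k x) (real n)" for n x
  note truncation = integral_truncation_tendsto[OF k, folded kn_def]
  have k_meas: "k \<in> borel_measurable M" using k(1) by auto
  have kn_meas: "kn n \<in> borel_measurable M" for n using truncation(1) by auto
  have "eventually (\<lambda>n. integral\<^sup>L M k - e / 2 < integral\<^sup>L M (kn n)) sequentially"
    using order_tendstoD(1)[OF truncation(2)] \<open>0 < e\<close> by simp
  then obtain N where N: "integral\<^sup>L M k - integral\<^sup>L M (kn N) < e / 2"
    unfolding eventually_sequentially by (metis add.commute diff_less_eq order_refl)
  have kn_bounds: "0 \<le> kn N x" "kn N x \<le> real N" "kn N x \<le> k x" for x
    unfolding kn_def using k(2) by simp_all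
  show ?thesis
  proof (intro exI[of _ "e / (2 * (real N + 1))"] conjI allI impI)
    show "0 < e / (2 * (real N + 1))" using \<open>0 < e\<close> by simp
    fix J assume J: "J \<in> borel_measurable M" "integrable M J" "\<forall>x. 0 \<le> J x \<and> J x \<le> 1"
      and small: "integral\<^sup>L M J < e / (2 * (real N + 1))"
    have weighted_rest: "0 \<le> J x * (k x - kn N x)" "J x * (k x - kn N x) \<le> k x - kn N x" for x
      using J(3) kn_bounds(3)[of x] by (auto intro: mult_left_le_one_le)
    have rest: "integrable M (\<lambda>x. J x * (k x - kn N x))"
    proof (rule Bochner_Integration.integrable_bound[OF k(1)])
      show "AE x in M. norm (J x * (k x - kn N x)) \<le> norm (k x)"
        using weighted_rest kn_bounds k(2) by (intro AE_I2) (smt (verit) real_norm_def)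
    qed (use J(1) k_meas kn_meas in measurable)
    have head: "integrable M (\<lambda>x. J x * kn N x)"
    proof (rule Bochner_Integration.integrable_bound[OF integrable_mult_right[OF J(2), of "real N"]])
      show "AE x in M. norm (J x * kn N x) \<le> norm (real N * J x)"
        using J(3) kn_bounds by (intro AE_I2) (simp add: abs_mult mult.commute mult_left_mono)
    qed (use J(1) kn_meas in measurable)
    have "integral\<^sup>L M (\<lambda>x. J x * k x) = integral\<^sup>L M (\<lambda>x. J x * (k x - kn N x)) + integral\<^sup>L M (\<lambda>x. J x * kn N x)"
      using rest head by (subst Bochner_Integration.integral_add[symmetric]) (auto simp: algebra_simps)
    also have "\<dots> \<le> integral\<^sup>L M (\<lambda>x. k x - kn N x) + integral\<^sup>L M (\<lambda>x. real N * J x)"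
    proof (intro add_mono integral_mono)
      show "J x * (k x - kn N x) \<le> k x - kn N x" for x by (rule weighted_rest)
      show "J x * kn N x \<le> real N * J x" for x
        using J(3) kn_bounds[of x] by (simp add: mult.commute mult_left_mono)
    qed (use rest head J(2) truncation(1) k(1) in auto)
    also have "\<dots> = (integral\<^sup>L M k - integral\<^sup>L M (kn N)) + real N * integral\<^sup>L M J"
      using truncation(1) k(1) by simp
    also have "\<dots> < e / 2 + real N * (e / (2 * (real N + 1)))"
      by (intro add_less_le_mono N mult_left_mono) (use small in auto)
    also have "\<dots> \<le> e"
      using \<open>0 < e\<close> by (simp add: field_simps)
    finally show "integral\<^sup>L M (\<lambda>x. J x * k x) < e" .
  qed
qed

lemma abs_integral_le_integral_abs_Ioc:
  fixes h :: "real \<Rightarrow> real"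
  assumes h: "h absolutely_integrable_on {a..b}" and st: "a \<le> s" "s \<le> t" "t \<le> b"
  shows "\<bar>integral {s..t} h\<bar> \<le> integral\<^sup>L lebesgue (\<lambda>x. indicator {s<..t} x * (indicator {a..b} x * \<bar>h x\<bar>))"
proof -
  have hst: "set_integrable lebesgue {s..t} h"
    by (rule set_integrable_subset[OF h]) (use st in auto)
  have "\<bar>integral {s..t} h\<bar> \<le> (LINT x:{s..t}|lebesgue. \<bar>h x\<bar>)"
    using set_lebesgue_integral_eq_integral(2)[OF hst] set_integral_norm_bound[OF hst] by simp
  also have "\<dots> = integral\<^sup>L lebesgue (\<lambda>x. indicator {s<..t} x * (indicator {a..b} x * \<bar>h x\<bar>))"
    unfolding set_lebesgue_integral_def
  proof (rule integral_cong_AE)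
    have "AE x in lebesgue. x \<noteq> s" by (rule AE_completion[OF AE_lborel_singleton])
    then show "AE x in lebesgue. indicator {s..t} x *\<^sub>R \<bar>h x\<bar> = indicator {s<..t} x * (indicator {a..b} x * \<bar>h x\<bar>)"
      by eventually_elim (use st in \<open>auto simp: indicator_def\<close>)
    have "integrable lebesgue (\<lambda>x. indicator {s<..t} x * (indicator {a..b} x * \<bar>h x\<bar>))"
      using integrable_mult_indicator[OF _ set_integrable_abs[OF h, unfolded set_integrable_def], of "{s<..t}"]
      by simp
    then show "(\<lambda>x. indicator {s<..t} x * (indicator {a..b} x * \<bar>h x\<bar>)) \<in> borel_measurable lebesgue"
      by auto
  qed (use set_integrable_abs[OF hst] in \<open>auto simp: set_integrable_def\<close>)
  finally show ?thesis .
qed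

lemma abs_cont_on_interval_integral:
  fixes h \<Phi> :: "real \<Rightarrow> real"
  assumes h: "h absolutely_integrable_on {a..b}"
    and \<Phi>: "\<And>s t. a \<le> s \<Longrightarrow> s \<le> t \<Longrightarrow> t \<le> b \<Longrightarrow> \<Phi> t - \<Phi> s = integral {s..t} h"
  shows "abs_cont_on_interval a b \<Phi>"
  unfolding abs_cont_on_interval_iff
proof (intro allI impI)
  fix e :: real assume "0 < e"
  define k where "k x = indicator {a..b} x * \<bar>h x\<bar>" for x
  have k: "integrable lebesgue k"
    using set_integrable_abs[OF h] unfolding k_def set_integrable_def by simp
  have k_nonneg: "\<And>x. 0 \<le> k x" by (simp add: k_def)
  have k_on_interval: "integrable lebesgue (\<lambda>x. indicator {s<..t} x * k x)" for s t
    using integrable_mult_indicator[OF _ k, of "{s<..t}"] by simp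
  have piece: "\<bar>\<Phi> t - \<Phi> s\<bar> \<le> integral\<^sup>L lebesgue (\<lambda>x. indicator {s<..t} x * k x)"
    if "a \<le> s" "s \<le> t" "t \<le> b" for s t
    unfolding \<Phi>[OF that] k_def by (rule abs_integral_le_integral_abs_Ioc[OF h that])
  obtain d where "0 < d" and d: "\<And>J. J \<in> borel_measurable lebesgue \<Longrightarrow> integrable lebesgue J \<Longrightarrow>
      \<forall>x. 0 \<le> J x \<and> J x \<le> 1 \<Longrightarrow> integral\<^sup>L lebesgue J < d \<Longrightarrow> integral\<^sup>L lebesgue (\<lambda>x. J x * k x) < e"
    using integral_small_weight[OF k k_nonneg \<open>0 < e\<close>] by blast
  show "\<exists>d>0. \<forall>n s t. nonoverlapping_subintervals a b n s t \<and> (\<Sum>i<n. t i - s i) < d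
      \<longrightarrow> (\<Sum>i<n. \<bar>\<Phi> (t i) - \<Phi> (s i)\<bar>) < e"
  proof (intro exI[of _ d] conjI allI impI)
    fix n s t assume st: "nonoverlapping_subintervals a b n s t \<and> (\<Sum>i<n. t i - s i) < d"
    define J where "J x = (\<Sum>i<n. indicator {s i<..t i} x :: real)" for x
    note J = indicator_sum_nonoverlapping_subintervals[OF conjunct1[OF st], folded J_def]
    have "(\<Sum>i<n. \<bar>\<Phi> (t i) - \<Phi> (s i)\<bar>) \<le> (\<Sum>i<n. integral\<^sup>L lebesgue (\<lambda>x. indicator {s i<..t i} x * k x))"
      using st by (intro sum_mono piece) (auto simp: nonoverlapping_subintervals_def)
    also have "\<dots> = integral\<^sup>L lebesgue (\<lambda>x. J x * k x)"
      unfolding J_def sum_distrib_right by (intro Bochner_Integration.integral_sum[symmetric] k_on_interval)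
    also have "\<dots> < e"
      using st J by (intro d) auto
    finally show "(\<Sum>i<n. \<bar>\<Phi> (t i) - \<Phi> (s i)\<bar>) < e" .
  qed (rule \<open>0 < d\<close>)
qed

section \<open>Integration on the line\<close>

lemma id_borel_measurable_lebesgue [measurable]: "(\<lambda>x::real. x) \<in> borel_measurable lebesgue"
  by (rule measurable_completion) simp

lemma set_integrable_lborel_imp_absolutely_integrable:
  fixes f :: "real \<Rightarrow> real"
  assumes "set_integrable lborel S f"
  shows "f absolutely_integrable_on S"
  using assms integrable_completion[of "\<lambda>x. indicator S x *\<^sub>R f x" lborel]
  unfolding set_integrable_def by auto

lemma sigma_finite_lebesgue: "sigma_finite_measure (lebesgue :: real measure)"
proof
  obtain A :: "real set set" where "countable A" "A \<subseteq> sets lborel" "\<Union>A = space lborel"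
      "\<forall>a\<in>A. emeasure lborel a \<noteq> \<infinity>"
    using lborel.sigma_finite_countable by blast
  then show "\<exists>A. countable A \<and> A \<subseteq> sets (lebesgue :: real measure) \<and> \<Union>A = space lebesgue \<and>
      (\<forall>a\<in>A. emeasure lebesgue a \<noteq> \<infinity>)"
    by (intro exI[of _ A]) (auto simp: subset_eq)
qed

lemma integral_averages_converge_ae:
  fixes f :: "real \<Rightarrow> real"
  assumes f: "\<And>c d. f integrable_on {c..d}"
  obtains N where "negligible N"
    "\<And>x e. x \<notin> N \<Longrightarrow> 0 < e \<Longrightarrow> \<exists>d>0. \<forall>k. 0 < k \<and> k < d \<longrightarrow>
        \<bar>integral {x..x+k} f / k - f x\<bar> < e \<and> \<bar>integral {x-k..x} f / k - f x\<bar> < e"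
proof -
  have f_reflect: "(\<lambda>t. f (- t)) integrable_on cbox c d" for c d
    using Henstock_Kurzweil_Integration.integrable_reflect_real[where f=f and a="-d" and b="-c", THEN iffD2, OF f]
    by (simp only: minus_minus cbox_interval)
  obtain N1 where N1: "negligible N1" "\<And>x e. \<lbrakk>x \<notin> N1; 0 < e\<rbrakk> \<Longrightarrow>
      \<exists>d>0. \<forall>h. 0 < h \<and> h < d \<longrightarrow> norm (integral (cbox x (x + h *\<^sub>R One)) f /\<^sub>R h ^ DIM(real) - f x) < e"
    using integrable_ccontinuous_explicit[of f] f by (metis cbox_interval)
  obtain N2 where N2: "negligible N2" "\<And>x e. \<lbrakk>x \<notin> N2; 0 < e\<rbrakk> \<Longrightarrow>
      \<exists>d>0. \<forall>h. 0 < h \<and> h < d \<longrightarrow>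
        norm (integral (cbox x (x + h *\<^sub>R One)) (\<lambda>t. f (- t)) /\<^sub>R h ^ DIM(real) - f (- x)) < e"
    using integrable_ccontinuous_explicit[of "\<lambda>t. f (- t)", OF f_reflect] by blast
  have "negligible (uminus ` N2)"
  proof (rule negligible_locally_Lipschitz_image[OF _ N2(1)])
    show "\<exists>T B. open T \<and> x \<in> T \<and> (\<forall>y\<in>N2 \<inter> T. norm (- y - - x) \<le> B * norm (y - x))" for x :: real
      by (intro exI[of _ UNIV] exI[of _ 1]) (simp add: abs_minus_commute)
  qed simp
  show ?thesis
  proof (rule that[of "N1 \<union> uminus ` N2"])
    show "negligible (N1 \<union> uminus ` N2)" using N1(1) \<open>negligible (uminus ` N2)\<close> by auto
    fix x e :: real assume x: "x \<notin> N1 \<union> uminus ` N2" and "0 < e"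
    then have "- x \<notin> N2" by (metis UnI2 image_eqI minus_minus)
    then obtain d2 where "d2 > 0" and d2: "\<forall>h. 0 < h \<and> h < d2 \<longrightarrow>
        norm (integral (cbox (- x) (- x + h *\<^sub>R One)) (\<lambda>t. f (- t)) /\<^sub>R h ^ DIM(real) - f x) < e"
      using N2(2)[of "- x" e] \<open>0 < e\<close> by auto
    obtain d1 where "d1 > 0" and d1: "\<forall>h. 0 < h \<and> h < d1 \<longrightarrow>
        norm (integral (cbox x (x + h *\<^sub>R One)) f /\<^sub>R h ^ DIM(real) - f x) < e"
      using N1(2)[of x e] x \<open>0 < e\<close> by blast
    show "\<exists>d>0. \<forall>k. 0 < k \<and> k < d \<longrightarrow>
        \<bar>integral {x..x+k} f / k - f x\<bar> < e \<and> \<bar>integral {x-k..x} f / k - f x\<bar> < e"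
    proof (intro exI[of _ "min d1 d2"] conjI allI impI)
      fix k :: real assume k: "0 < k \<and> k < min d1 d2"
      show "\<bar>integral {x..x+k} f / k - f x\<bar> < e"
        using d1[rule_format, of k] k by (simp add: cbox_interval divide_inverse mult.commute)
      have "integral {- x..- x + k} (\<lambda>t. f (- t)) = integral {x-k..x} f"
        using Henstock_Kurzweil_Integration.integral_reflect_real[where f=f and a="x - k" and b=x] by simp
      then show "\<bar>integral {x-k..x} f / k - f x\<bar> < e"
        using d2[rule_format, of k] k by (simp add: cbox_interval divide_inverse mult.commute)
    qed (use \<open>d1 > 0\<close> \<open>d2 > 0\<close> in simp)
  qed
qed

lemma indefinite_integral_has_real_derivative_ae:
  fixes f :: "real \<Rightarrow> real"
  assumes f: "f absolutely_integrable_on {a..b}"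
  obtains N where "negligible N"
    "\<And>x. x \<in> {a<..<b} - N \<Longrightarrow> ((\<lambda>u. integral {a..u} f) has_real_derivative f x) (at x)"
proof -
  define f0 where "f0 t = (if t \<in> {a..b} then f t else 0)" for t
  have "f integrable_on {a..b}" using f set_lebesgue_integral_eq_integral(1) by blast
  then have "f0 integrable_on UNIV" unfolding f0_def by (rule integrable_restrict_UNIV[THEN iffD2])
  then have f0_integrable: "f0 integrable_on {c..d}" for c d
    by (metis integrable_on_subcbox cbox_interval subset_UNIV)
  obtain N where "negligible N" and N: "\<And>x e. x \<notin> N \<Longrightarrow> 0 < e \<Longrightarrow> \<exists>d>0. \<forall>k. 0 < k \<and> k < d \<longrightarrow>
      \<bar>integral {x..x+k} f0 / k - f0 x\<bar> < e \<and> \<bar>integral {x-k..x} f0 / k - f0 x\<bar> < e"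
    using integral_averages_converge_ae[OF f0_integrable] by blast
  let ?F = "\<lambda>u. integral {a..u} f"
  have F_diff: "?F z - ?F y = integral {y..z} f0" if "a \<le> y" "y \<le> z" "z \<le> b" for y z
  proof -
    have "f integrable_on {a..z}" using \<open>f integrable_on {a..b}\<close> integrable_on_subinterval that by fastforce
    then have "?F z - ?F y = integral {y..z} f" using Henstock_Kurzweil_Integration.integral_combine[of a y z f] that by simp
    also have "\<dots> = integral {y..z} f0" using that by (intro integral_cong) (auto simp: f0_def)
    finally show ?thesis .
  qed
  show ?thesis
  proof (rule that[OF \<open>negligible N\<close>])
    fix x assume x: "x \<in> {a<..<b} - N"
    have "((\<lambda>y. (?F y - ?F x) / (y - x)) \<longlongrightarrow> f x) (at x)"
    proof (rule filterlim_split_at; unfold tendsto_iff dist_real_def; intro allI impI)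
      fix e :: real assume "0 < e"
      have "f0 x = f x" using x by (simp add: f0_def)
      then obtain d where "d > 0" and d: "\<forall>k. 0 < k \<and> k < d \<longrightarrow>
          \<bar>integral {x..x+k} f0 / k - f x\<bar> < e \<and> \<bar>integral {x-k..x} f0 / k - f x\<bar> < e"
        using N[of x e] x \<open>0 < e\<close> by auto
      show "\<forall>\<^sub>F y in at_right x. \<bar>(?F y - ?F x) / (y - x) - f x\<bar> < e"
        unfolding eventually_at_right_field
      proof (intro exI[of _ "x + min d (b - x)"] conjI allI impI)
        fix y assume y: "x < y" "y < x + min d (b - x)"
        then show "\<bar>(?F y - ?F x) / (y - x) - f x\<bar> < e"
          using d[rule_format, of "y - x"] F_diff[of x y] x by auto
      qed (use \<open>d > 0\<close> x in auto)
      show "\<forall>\<^sub>F y in at_left x. \<bar>(?F y - ?F x) / (y - x) - f x\<bar> < e"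
        unfolding eventually_at_left_field
      proof (intro exI[of _ "x - min d (x - a)"] conjI allI impI)
        fix y assume y: "x - min d (x - a) < y" "y < x"
        have "(?F y - ?F x) / (y - x) = (?F x - ?F y) / (x - y)"
          by (metis minus_diff_eq minus_divide_divide)
        also have "\<dots> = integral {x - (x - y)..x} f0 / (x - y)"
          using F_diff[of y x] x y by simp
        finally show "\<bar>(?F y - ?F x) / (y - x) - f x\<bar> < e"
          using d[rule_format, of "x - y"] y by auto
      qed (use \<open>d > 0\<close> x in auto)
    qed
    then show "(?F has_real_derivative f x) (at x)"
      using has_field_derivative_iff by blast
  qed
qed

section \<open>Open intervals with extended-real endpoints\<close>

lemma atLeastAtMost_subset_einterval:
  assumes "a \<in> einterval d0 d1" "b \<in> einterval d0 d1"
  shows "{a..b} \<subseteq> einterval d0 d1"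
proof
  fix x assume "x \<in> {a..b}"
  then have "ereal a \<le> ereal x" "ereal x \<le> ereal b" by auto
  then show "x \<in> einterval d0 d1"
    using assms unfolding einterval_iff by (meson order.strict_trans1 order.strict_trans2)
qed

lemma einterval_subset_einterval:
  assumes "d0 \<le> a" "b \<le> d1"
  shows "einterval a b \<subseteq> einterval d0 d1"
proof
  fix x assume "x \<in> einterval a b"
  then show "x \<in> einterval d0 d1"
    using assms unfolding einterval_iff by (meson order.strict_trans1 order.strict_trans2)
qed

lemma einterval_bounded_by:
  assumes "x \<in> einterval d0 d1"
  obtains a b where "a \<in> einterval d0 d1" "b \<in> einterval d0 d1" "a < x" "x < b"
proof -
  obtain e where "e > 0" "ball x e \<subseteq> einterval d0 d1"
    using open_contains_ball_eq[OF open_einterval] assms by blast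
  then show ?thesis by (intro that[of "x - e/2" "x + e/2"]) (auto simp: dist_real_def)
qed

lemma has_real_derivative_ae_einterval:
  fixes h \<Phi> :: "real \<Rightarrow> real" and d0 d1 :: ereal
  assumes "d0 < d1"
    and h: "\<And>a b. a \<in> einterval d0 d1 \<Longrightarrow> b \<in> einterval d0 d1 \<Longrightarrow> h absolutely_integrable_on {a..b}"
    and \<Phi>: "\<And>a u. a \<in> einterval d0 d1 \<Longrightarrow> u \<in> einterval d0 d1 \<Longrightarrow> a \<le> u \<Longrightarrow> \<Phi> u - \<Phi> a = integral {a..u} h"
  obtains N where "negligible N" "\<And>x. x \<in> einterval d0 d1 - N \<Longrightarrow> (\<Phi> has_real_derivative h x) (at x)"
proof -
  obtain l u :: "nat \<Rightarrow> real" where lu: "einterval d0 d1 = (\<Union>i. {l i .. u i})"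
    "\<And>i. l i < u i" "l \<longlonglongrightarrow> d0" "u \<longlonglongrightarrow> d1"
    by (rule einterval_Icc_approximation[OF \<open>d0 < d1\<close>]) blast
  have lu_in: "l i \<in> einterval d0 d1" "u i \<in> einterval d0 d1" for i
    using lu(2)[of i] unfolding lu(1) by (auto intro: less_imp_le)
  have "\<forall>i. \<exists>N. negligible N \<and>
      (\<forall>x\<in>{l i<..<u i} - N. ((\<lambda>y. integral {l i..y} h) has_real_derivative h x) (at x))"
    using indefinite_integral_has_real_derivative_ae[OF h[OF lu_in]] by metis
  then obtain N where N: "\<And>i. negligible (N i)"
    "\<And>i x. x \<in> {l i<..<u i} - N i \<Longrightarrow> ((\<lambda>y. integral {l i..y} h) has_real_derivative h x) (at x)"
    by metis
  show ?thesis
  proof (rule that[of "\<Union>i. N i"])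
    show "negligible (\<Union>i. N i)" using N(1) negligible_Union_nat by blast
    fix x assume x: "x \<in> einterval d0 d1 - (\<Union>i. N i)"
    have "eventually (\<lambda>i. ereal (l i) < ereal x \<and> ereal x < ereal (u i)) sequentially"
      using order_tendstoD(2)[OF lu(3), of "ereal x"] order_tendstoD(1)[OF lu(4), of "ereal x"] x
      by (auto simp: einterval_iff intro: eventually_conj)
    then obtain i where i: "l i < x" "x < u i" unfolding eventually_sequentially by auto
    have "((\<lambda>y. \<Phi> (l i) + integral {l i..y} h) has_real_derivative h x) (at x)"
      using N(2)[of x i] i x by (auto intro!: derivative_eq_intros)
    then show "(\<Phi> has_real_derivative h x) (at x)"
    proof (rule has_field_derivative_transform_within_open)
      fix y assume "y \<in> {l i<..<u i}"
      moreover from this have "y \<in> einterval d0 d1" unfolding lu(1) by (auto intro!: exI[of _ i])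
      ultimately show "\<Phi> (l i) + integral {l i..y} h = \<Phi> y" using \<Phi>[OF lu_in(1)[of i], of y] by auto
    qed (use i in auto)
  qed
qed

lemma DERIV_nonneg_imp_mono_einterval:
  fixes f F :: "real \<Rightarrow> real" and a b :: ereal
  assumes F: "\<And>x. a < ereal x \<Longrightarrow> ereal x < b \<Longrightarrow> (F has_real_derivative f x) (at x)"
    and f_nonneg: "\<And>x. a < ereal x \<Longrightarrow> ereal x < b \<Longrightarrow> 0 \<le> f x"
    and "a < ereal x" "x \<le> y" "ereal y < b"
  shows "F x \<le> F y"
proof (rule DERIV_nonneg_imp_increasing_open[OF \<open>x \<le> y\<close>])
  have inside: "a < ereal z \<and> ereal z < b" if "x \<le> z" "z \<le> y" for z
    using that assms(3,5) by (meson ereal_less_eq(3) order.strict_trans1 order.strict_trans2)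
  then show "continuous_on {x..y} F"
    by (intro continuous_at_imp_continuous_on ballI) (metis DERIV_isCont F atLeastAtMost_iff)
  show "\<exists>d. (F has_real_derivative d) (at z) \<and> 0 \<le> d" if "x < z" "z < y" for z
    using F f_nonneg inside that by (meson less_imp_le)
qed

text \<open>The integrals over an exhaustion by compact intervals increase and are bounded by \<open>B - A\<close>,
  so they converge.\<close>

lemma interval_integral_nonneg_le_antiderivative:
  fixes f F :: "real \<Rightarrow> real" and a b :: ereal
  assumes "a < b"
    and F: "\<And>x. a < ereal x \<Longrightarrow> ereal x < b \<Longrightarrow> (F has_real_derivative f x) (at x)"
    and f: "\<And>x. a < ereal x \<Longrightarrow> ereal x < b \<Longrightarrow> isCont f x"
    and f_nonneg: "\<And>x. a < ereal x \<Longrightarrow> ereal x < b \<Longrightarrow> 0 \<le> f x"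
    and F_bounds: "\<And>x. a < ereal x \<Longrightarrow> ereal x < b \<Longrightarrow> A \<le> F x \<and> F x \<le> B"
  shows "set_integrable lborel (einterval a b) f" "(LBINT x=a..b. f x) \<le> B - A"
proof -
  obtain u l where approx: "einterval a b = (\<Union>i. {l i .. u i})"
    "incseq u" "decseq l" "\<And>i. l i < u i" "\<And>i. a < l i" "\<And>i. u i < b"
    "l \<longlonglongrightarrow> a" "u \<longlonglongrightarrow> b"
    by (blast intro: einterval_Icc_approximation[OF \<open>a < b\<close>])
  have inside: "a < ereal x" "ereal x < b" if "l i \<le> x" "x \<le> u i" for x i
    using approx(5,6)[of i] that by (meson ereal_less_eq(3) order.strict_trans1 order.strict_trans2)+
  have f_cont: "isCont f x" if "l i \<le> x" "x \<le> u i" for x i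
    using f inside that by blast
  have F_mono: "F x \<le> F y" if "a < ereal x" "x \<le> y" "ereal y < b" for x y
    by (rule DERIV_nonneg_imp_mono_einterval[OF F f_nonneg that])
  have FTC: "(LBINT x=l i..u i. f x) = F (u i) - F (l i)" for i
  proof (rule interval_integral_FTC_finite)
    show "continuous_on {min (l i) (u i)..max (l i) (u i)} f"
      using approx(4)[of i] by (intro continuous_at_imp_continuous_on) (auto simp: min_def max_def intro: f_cont)
    show "(F has_vector_derivative f x) (at x within {min (l i) (u i)..max (l i) (u i)})"
      if "min (l i) (u i) \<le> x" "x \<le> max (l i) (u i)" for x
      using that approx(4)[of i] F[OF inside]
      by (simp add: min_def max_def has_real_derivative_iff_has_vector_derivative has_vector_derivative_at_within)
  qed
  have "incseq (\<lambda>i. F (u i) - F (l i))"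
    unfolding incseq_def
  proof (intro allI impI)
    fix i j :: nat assume "i \<le> j"
    then have "u i \<le> u j" "l j \<le> l i" using approx(2,3) by (auto simp: incseq_def decseq_def)
    then show "F (u i) - F (l i) \<le> F (u j) - F (l j)"
      using F_mono[of "u i" "u j"] F_mono[of "l j" "l i"] inside[OF order_refl] inside[OF _ order_refl] approx(4)
      by (smt (verit))
  qed
  moreover have bounded: "\<forall>i. F (u i) - F (l i) \<le> B - A"
    using F_bounds inside[OF order_refl] inside[OF _ order_refl] approx(4) by (smt (verit))
  ultimately obtain C where C: "(\<lambda>i. F (u i) - F (l i)) \<longlonglongrightarrow> C"
    using incseq_convergent by blast
  have on_compacts: "set_integrable lborel {l i..u i} f" for i
    by (intro borel_integrable_atLeastAtMost' continuous_at_imp_continuous_on ballI f_cont) auto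
  have meas: "set_borel_measurable lborel (einterval a b) f"
    unfolding set_borel_measurable_def
    by (auto simp del: real_scaleR_def intro!: borel_measurable_continuous_on_indicator
        simp: continuous_on_eq_continuous_at einterval_iff f)
  note approx_nonneg = interval_integral_Icc_approx_nonneg[OF \<open>a < b\<close> approx on_compacts _ meas C[folded FTC]]
  show "set_integrable lborel (einterval a b) f"
    by (rule approx_nonneg(1)) (use f_nonneg in auto)
  have "(LBINT x=a..b. f x) = C"
    by (rule approx_nonneg(2)) (use f_nonneg in auto)
  then show "(LBINT x=a..b. f x) \<le> B - A"
    using LIMSEQ_le_const2[OF C] bounded by auto
qed

lemma continuous_on_einterval_if_integral:
  fixes h \<Phi> :: "real \<Rightarrow> real"
  assumes h: "\<And>a b. a \<in> einterval d0 d1 \<Longrightarrow> b \<in> einterval d0 d1 \<Longrightarrow> h integrable_on {a..b}"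
    and \<Phi>: "\<And>a u. a \<in> einterval d0 d1 \<Longrightarrow> u \<in> einterval d0 d1 \<Longrightarrow> a \<le> u \<Longrightarrow> \<Phi> u - \<Phi> a = integral {a..u} h"
  shows "continuous_on (einterval d0 d1) \<Phi>"
proof (rule continuous_at_imp_continuous_on, rule ballI)
  fix x assume "x \<in> einterval d0 d1"
  then obtain a b where ab: "a \<in> einterval d0 d1" "b \<in> einterval d0 d1" "a < x" "x < b"
    by (rule einterval_bounded_by)
  have "continuous_on {a..b} (\<lambda>u. \<Phi> a + integral {a..u} h)"
    by (intro continuous_intros indefinite_integral_continuous_1 h ab)
  moreover have "\<Phi> a + integral {a..u} h = \<Phi> u" if "u \<in> {a..b}" for u
    using \<Phi>[OF ab(1), of u] atLeastAtMost_subset_einterval[OF ab(1,2)] that by auto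
  ultimately have "continuous_on {a..b} \<Phi>" by (rule continuous_on_eq)
  then show "isCont \<Phi> x" by (rule continuous_on_interior) (use ab in auto)
qed

lemma primitive_diff:
  fixes h :: "real \<Rightarrow> real"
  assumes h: "\<And>a b. a \<in> einterval d0 d1 \<Longrightarrow> b \<in> einterval d0 d1 \<Longrightarrow> set_integrable lborel {a..b} h"
    and c: "c \<in> einterval d0 d1" and y: "y \<in> einterval d0 d1" and x: "x \<in> einterval d0 d1" and "y \<le> x"
  shows "primitive d0 d1 c h x - primitive d0 d1 c h y = integral {y..x} h"
proof -
  let ?B = "base_point d0 d1 c h"
  have "interval_lebesgue_integrable lborel (min ?B (min (ereal y) (ereal x))) (max ?B (max (ereal y) (ereal x))) h"
  proof (cases "\<forall>x\<in>einterval d0 d1. interval_lebesgue_integrable lborel d0 (ereal x) h")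
    case True
    then have "?B = d0" unfolding base_point_def by simp
    moreover have "d0 < ereal y" using y by (simp add: einterval_iff)
    moreover from this have "d0 \<le> ereal x" using \<open>y \<le> x\<close> by (meson ereal_less_eq(3) less_imp_le order_trans)
    ultimately have "min ?B (min (ereal y) (ereal x)) = d0" "max ?B (max (ereal y) (ereal x)) = ereal x"
      using \<open>y \<le> x\<close> by (auto simp: min_def max_def)
    then show ?thesis using True x by simp
  next
    case False
    then have "?B = ereal c" unfolding base_point_def by (simp only: if_False)
    let ?m = "min c (min y x)" and ?M = "max c (max y x)"
    have "?m \<in> einterval d0 d1" "?M \<in> einterval d0 d1" using c x y by (auto simp: min_def max_def)
    then have "set_integrable lborel {?m<..<?M} h"
      by (rule set_integrable_subset[OF h]) auto
    moreover have "min ?B (min (ereal y) (ereal x)) = ereal ?m" "max ?B (max (ereal y) (ereal x)) = ereal ?M"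
      using \<open>?B = ereal c\<close> by (auto simp: min_def max_def)
    moreover have "ereal ?m \<le> ereal ?M" by (simp only: ereal_less_eq(3))
    ultimately show ?thesis
      unfolding interval_lebesgue_integrable_def by (simp only: if_True einterval_eq_Icc)
  qed
  then have "primitive d0 d1 c h x - primitive d0 d1 c h y = (LBINT t=ereal y..ereal x. h t)"
    using interval_integral_sum unfolding primitive_def by (metis add_diff_cancel_left')
  also have "\<dots> = (LINT t:{y<..<x}|lborel. h t)"
    using \<open>y \<le> x\<close> by (simp add: interval_lebesgue_integral_def)
  also have "\<dots> = integral {y<..<x} h"
    by (rule set_borel_integral_eq_integral(2)) (rule set_integrable_subset[OF h[OF y x]], auto)
  also have "\<dots> = integral {y..x} h" by (simp add: integral_open_interval_real)
  finally show ?thesis .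
qed

section \<open>The resolvent\<close>

locale transport_resolvent =
  fixes d0 d1 :: ereal and g \<phi> :: "real \<Rightarrow> real" and x0 x1 lam :: real
  assumes d0_less_d1: "d0 < d1"
    and g_continuous: "continuous_on (einterval d0 d1) g" and g_pos: "\<forall>x\<in>einterval d0 d1. 0 < g x"
    and \<phi>_borel: "\<phi> \<in> borel_measurable borel" and \<phi>_nonneg: "\<forall>x\<in>einterval d0 d1. 0 \<le> \<phi> x"
    and \<phi>_locally_integrable: "\<forall>K. compact K \<and> K \<subseteq> einterval d0 d1 \<longrightarrow> set_integrable lborel K \<phi>"
    and x0_in: "x0 \<in> einterval d0 d1" and x1_in: "x1 \<in> einterval d0 d1"
    and lam_pos: "0 < lam"
begin

abbreviation "E \<equiv> einterval d0 d1"
abbreviation "G \<equiv> Gfun d0 d1 x0 g"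
abbreviation "Q \<equiv> Qfun d0 d1 x1 g \<phi>"
abbreviation "Q_lam \<equiv> Qlam d0 d1 x0 x1 g \<phi> lam"

definition Q_lam_density :: "real \<Rightarrow> real" where "Q_lam_density z = lam * (1 / g z) + \<phi> z / g z"

lemma g_nonzero: "x \<in> E \<Longrightarrow> g x \<noteq> 0"
  using g_pos by force

lemma continuous_on_inverse_g:
  assumes "a \<in> E" "b \<in> E"
  shows "continuous_on {a..b} (\<lambda>z. 1 / g z)"
  using atLeastAtMost_subset_einterval[OF assms] g_nonzero
  by (intro continuous_intros continuous_on_subset[OF g_continuous]) auto

lemma integrable_inverse_g: "a \<in> E \<Longrightarrow> b \<in> E \<Longrightarrow> set_integrable lborel {a..b} (\<lambda>z. 1 / g z)"
  unfolding set_integrable_def by (rule borel_integrable_compact) (auto intro: continuous_on_inverse_g)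

lemma integrable_\<phi>_over_g:
  assumes a: "a \<in> E" and b: "b \<in> E"
  shows "set_integrable lborel {a..b} (\<lambda>z. \<phi> z / g z)"
proof -
  have "(\<lambda>z. 1 / g z * \<phi> z) absolutely_integrable_on {a..b}"
  proof (rule absolutely_integrable_bounded_measurable_product_real)
    show "(\<lambda>z. 1 / g z) \<in> borel_measurable (lebesgue_on {a..b})"
      by (intro continuous_imp_measurable_on_sets_lebesgue continuous_on_inverse_g a b) simp
    show "bounded ((\<lambda>z. 1 / g z) ` {a..b})"
      by (intro compact_imp_bounded compact_continuous_image continuous_on_inverse_g a b compact_Icc)
    show "\<phi> absolutely_integrable_on {a..b}"
      using \<phi>_locally_integrable atLeastAtMost_subset_einterval[OF a b]
      by (intro set_integrable_lborel_imp_absolutely_integrable) auto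
  qed simp
  then have integrable: "integrable lebesgue (\<lambda>x. indicator {a..b} x *\<^sub>R (\<phi> x / g x))"
    by (simp add: set_integrable_def mult.commute)
  have "(\<lambda>x. indicator {a..b} x *\<^sub>R (1 / g x)) \<in> borel_measurable borel"
    by (rule borel_measurable_continuous_on_indicator) (auto intro: continuous_on_inverse_g[OF a b])
  moreover have "(\<lambda>x. indicator {a..b} x *\<^sub>R \<phi> x) \<in> borel_measurable borel"
    using \<phi>_borel by measurable
  ultimately have "(\<lambda>x. (indicator {a..b} x *\<^sub>R \<phi> x) * (indicator {a..b} x *\<^sub>R (1 / g x))) \<in> borel_measurable borel"
    by (rule borel_measurable_times[rotated])
  then have "(\<lambda>x. indicator {a..b} x *\<^sub>R (\<phi> x / g x)) \<in> borel_measurable lborel"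
    unfolding measurable_lborel2 by (rule measurable_cong[THEN iffD1, rotated]) (simp add: indicator_def)
  with integrable show ?thesis
    unfolding set_integrable_def by (simp only: integrable_completion)
qed

lemma integrable_Q_lam_density: "a \<in> E \<Longrightarrow> b \<in> E \<Longrightarrow> set_integrable lborel {a..b} Q_lam_density"
  unfolding Q_lam_density_def using integrable_inverse_g integrable_\<phi>_over_g
  by (intro set_integral_add set_integrable_mult_right) auto

lemma G_diff: "y \<in> E \<Longrightarrow> x \<in> E \<Longrightarrow> y \<le> x \<Longrightarrow> G x - G y = integral {y..x} (\<lambda>z. 1 / g z)"
  unfolding Gfun_def by (rule primitive_diff[OF integrable_inverse_g x0_in])

lemma Q_diff: "y \<in> E \<Longrightarrow> x \<in> E \<Longrightarrow> y \<le> x \<Longrightarrow> Q x - Q y = integral {y..x} (\<lambda>z. \<phi> z / g z)"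
  unfolding Qfun_def by (rule primitive_diff[OF integrable_\<phi>_over_g x1_in])

lemma Q_lam_diff:
  assumes "y \<in> E" "x \<in> E" "y \<le> x"
  shows "Q_lam x - Q_lam y = integral {y..x} Q_lam_density"
proof -
  have inverse_g: "(\<lambda>z. 1 / g z) integrable_on {y..x}"
    by (rule set_borel_integral_eq_integral(1)[OF integrable_inverse_g[OF assms(1,2)]])
  have \<phi>_over_g: "(\<lambda>z. \<phi> z / g z) integrable_on {y..x}"
    by (rule set_borel_integral_eq_integral(1)[OF integrable_\<phi>_over_g[OF assms(1,2)]])
  have "integral {y..x} Q_lam_density = integral {y..x} (\<lambda>z. lam * (1 / g z)) + integral {y..x} (\<lambda>z. \<phi> z / g z)"
    using integrable_cmul[OF inverse_g, of lam] unfolding Q_lam_density_def by (simp add: integral_add[OF _ \<phi>_over_g])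
  also have "integral {y..x} (\<lambda>z. lam * (1 / g z)) = lam * integral {y..x} (\<lambda>z. 1 / g z)"
    by (rule integral_mult[OF inverse_g, symmetric])
  finally have "integral {y..x} Q_lam_density = lam * integral {y..x} (\<lambda>z. 1 / g z) + integral {y..x} (\<lambda>z. \<phi> z / g z)" .
  then show ?thesis
    unfolding Qlam_def using G_diff[OF assms] Q_diff[OF assms] by (simp add: algebra_simps)
qed

lemma integral_nonneg_on_E:
  fixes h :: "real \<Rightarrow> real"
  assumes "y \<in> E" "x \<in> E" "set_integrable lborel {y..x} h" "\<And>z. z \<in> E \<Longrightarrow> 0 \<le> h z"
  shows "0 \<le> integral {y..x} h"
  using atLeastAtMost_subset_einterval[OF assms(1,2)] assms(4)
  by (intro integral_nonneg[OF set_borel_integral_eq_integral(1)[OF assms(3)]]) auto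

lemma G_mono: "y \<in> E \<Longrightarrow> x \<in> E \<Longrightarrow> y \<le> x \<Longrightarrow> G y \<le> G x"
  using G_diff integral_nonneg_on_E[OF _ _ integrable_inverse_g] g_pos
  by (smt (verit) divide_nonneg_nonneg)

lemma lam_G_diff_le_Q_lam_diff:
  assumes "y \<in> E" "x \<in> E" "y \<le> x"
  shows "lam * (G x - G y) \<le> Q_lam x - Q_lam y"
proof -
  have "0 \<le> Q x - Q y"
    unfolding Q_diff[OF assms] using assms g_pos \<phi>_nonneg
    by (intro integral_nonneg_on_E[OF _ _ integrable_\<phi>_over_g]) auto
  then show ?thesis unfolding Qlam_def by (simp add: algebra_simps)
qed

lemma Q_lam_mono: "y \<in> E \<Longrightarrow> x \<in> E \<Longrightarrow> y \<le> x \<Longrightarrow> Q_lam y \<le> Q_lam x"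
  using lam_G_diff_le_Q_lam_diff[of y x] G_mono[of y x] lam_pos by (smt (verit) mult_nonneg_nonneg)

lemma G_has_derivative: "x \<in> E \<Longrightarrow> (G has_real_derivative 1 / g x) (at x)"
proof -
  assume "x \<in> E"
  then obtain a b where ab: "a \<in> E" "b \<in> E" "a < x" "x < b"
    by (rule einterval_bounded_by)
  have "((\<lambda>u. integral {a..u} (\<lambda>z. 1 / g z)) has_real_derivative 1 / g x) (at x within {a..b})"
    by (rule integral_has_real_derivative[OF continuous_on_inverse_g[OF ab(1,2)]]) (use ab in auto)
  then have "((\<lambda>u. G a + integral {a..u} (\<lambda>z. 1 / g z)) has_real_derivative 1 / g x) (at x)"
    using ab by (auto simp: at_within_Icc_at intro!: derivative_eq_intros)
  then show ?thesis
  proof (rule has_field_derivative_transform_within_open[of _ _ _ "{a<..<b}"])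
    fix u assume u: "u \<in> {a<..<b}"
    then have "u \<in> E" using atLeastAtMost_subset_einterval[OF ab(1,2)] by auto
    then show "G a + integral {a..u} (\<lambda>z. 1 / g z) = G u"
      using G_diff[OF ab(1) \<open>u \<in> E\<close>] u by simp
  qed (use ab in auto)
qed

lemma Q_lam_continuous: "continuous_on E Q_lam"
  by (rule continuous_on_einterval_if_integral[OF set_borel_integral_eq_integral(1)[OF integrable_Q_lam_density] Q_lam_diff])

lemma G_continuous: "continuous_on E G"
  by (rule continuous_at_imp_continuous_on) (use G_has_derivative DERIV_continuous in blast)

lemma exp_G_has_derivative:
  assumes "x \<in> E"
  shows "((\<lambda>x. - exp (- lam * (G x - G y)) / lam) has_real_derivative exp (- lam * (G x - G y)) * (1 / g x)) (at x)"
proof -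
  have "((\<lambda>x. exp (- lam * (G x - G y))) has_real_derivative exp (- lam * (G x - G y)) * (- lam * (1 / g x))) (at x)"
    by (rule DERIV_chain2[OF DERIV_exp]) (auto intro!: derivative_eq_intros G_has_derivative[OF assms])
  from DERIV_cdivide[OF DERIV_minus[OF this], of lam] show ?thesis
    using lam_pos by (simp add: field_simps)
qed

lemma exp_G_integral_le:
  assumes y: "y \<in> E"
  shows "set_integrable lborel (einterval (ereal y) d1) (\<lambda>x. exp (- lam * (G x - G y)) * (1 / g x))"
    "(LBINT x=ereal y..d1. exp (- lam * (G x - G y)) * (1 / g x)) \<le> 1 / lam"
proof -
  let ?f = "\<lambda>x. exp (- lam * (G x - G y)) * (1 / g x)"
  have "ereal y < d1" using y by (simp add: einterval_iff)
  have in_E: "x \<in> E" "y < x" if "ereal y < ereal x" "ereal x < d1" for x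
    using y that by (auto simp: einterval_iff intro: less_trans)
  have "continuous_on E ?f"
    using g_nonzero by (intro continuous_intros G_continuous g_continuous) auto
  then have "isCont ?f x" if "ereal y < ereal x" "ereal x < d1" for x
    using in_E[OF that] continuous_on_eq_continuous_at[OF open_einterval] by blast
  moreover have "0 \<le> ?f x" if "ereal y < ereal x" "ereal x < d1" for x
    using in_E(1)[OF that] g_pos by (simp add: less_imp_le)
  moreover have "- 1 / lam \<le> - exp (- lam * (G x - G y)) / lam \<and> - exp (- lam * (G x - G y)) / lam \<le> 0"
    if "ereal y < ereal x" "ereal x < d1" for x
    using G_mono[OF y in_E(1)[OF that]] in_E(2)[OF that] lam_pos by (simp add: divide_right_mono)
  ultimately have "set_integrable lborel (einterval (ereal y) d1) ?f" "(LBINT x=ereal y..d1. ?f x) \<le> 0 - (- 1 / lam)"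
    using interval_integral_nonneg_le_antiderivative[OF \<open>ereal y < d1\<close> exp_G_has_derivative[OF in_E(1)]]
    by blast+
  then show "set_integrable lborel (einterval (ereal y) d1) ?f" "(LBINT x=ereal y..d1. ?f x) \<le> 1 / lam"
    by simp_all
qed

text \<open>The integrand of \<open>R\<^sub>\<lambda>\<close>, with \<open>exp (Q_lam y - Q_lam x)\<close> split into a factor in \<open>x\<close> and a
  factor in \<open>y\<close> so that joint measurability is evident.\<close>

definition kernel :: "real \<Rightarrow> real \<Rightarrow> real" where
  "kernel x y = indicator E x * (exp (- Q_lam x) / g x) * indicator {y<..} x * (indicator E y * exp (Q_lam y))"

lemma kernel_nonneg: "0 \<le> kernel x y"
  unfolding kernel_def using g_pos by (auto simp: indicator_def)

lemma borel_measurable_indicator_E_times: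
  fixes f :: "real \<Rightarrow> real"
  assumes "continuous_on E f"
  shows "(\<lambda>x. indicator E x * f x) \<in> borel_measurable lebesgue"
  using borel_measurable_continuous_on_indicator[OF _ assms] by (intro measurable_completion) simp

lemma kernel_measurable: "(\<lambda>p. kernel (fst p) (snd p)) \<in> borel_measurable (lebesgue \<Otimes>\<^sub>M lebesgue)"
proof -
  let ?M = "lebesgue \<Otimes>\<^sub>M lebesgue :: (real \<times> real) measure"
  have "(\<lambda>x. indicator E x * (exp (- Q_lam x) / g x)) \<in> borel_measurable lebesgue"
    using g_nonzero by (intro borel_measurable_indicator_E_times continuous_intros Q_lam_continuous g_continuous) auto
  then have left: "(\<lambda>p. indicator E (fst p) * (exp (- Q_lam (fst p)) / g (fst p))) \<in> borel_measurable ?M"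
    by (rule measurable_compose[OF measurable_fst])
  have "(\<lambda>y. indicator E y * exp (Q_lam y)) \<in> borel_measurable lebesgue"
    by (intro borel_measurable_indicator_E_times continuous_intros Q_lam_continuous)
  then have right: "(\<lambda>p. indicator E (snd p) * exp (Q_lam (snd p))) \<in> borel_measurable ?M"
    by (rule measurable_compose[OF measurable_snd])
  have "{p \<in> space ?M. snd p < fst p} \<in> sets ?M"
    by (rule borel_measurable_less[OF measurable_compose[OF measurable_snd id_borel_measurable_lebesgue]
          measurable_compose[OF measurable_fst id_borel_measurable_lebesgue]])
  then have order: "(\<lambda>p. indicator {p \<in> space ?M. snd p < fst p} p :: real) \<in> borel_measurable ?M"
    by (rule borel_measurable_indicator)
  have "(\<lambda>p. kernel (fst p) (snd p)) = (\<lambda>p. indicator E (fst p) * (exp (- Q_lam (fst p)) / g (fst p)) *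
      indicator {p \<in> space ?M. snd p < fst p} p * (indicator E (snd p) * exp (Q_lam (snd p))))"
    by (auto simp: kernel_def indicator_def space_pair_measure)
  also have "\<dots> \<in> borel_measurable ?M"
    by (rule borel_measurable_times[OF borel_measurable_times[OF left order] right])
  finally show ?thesis .
qed

lemma Rlam_eq_kernel_integral:
  "indicator E x * Rlam d0 d1 x0 x1 g \<phi> lam v x = (LINT y|lebesgue. kernel x y * (indicator E y * v y))"
proof (cases "x \<in> E")
  case True
  then have "einterval d0 (ereal x) \<subseteq> E"
    by (intro einterval_subset_einterval) (auto simp: einterval_iff)
  then have "indicator E y *\<^sub>R (indicator (einterval d0 (ereal x)) y * (exp (Q_lam y - Q_lam x) / g x) * v y) =
      kernel x y * (indicator E y * v y)" for y
    using True by (auto simp: kernel_def indicator_def einterval_iff exp_diff exp_minus field_simps)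
  then have "Rlam d0 d1 x0 x1 g \<phi> lam v x = (LINT y|lebesgue. kernel x y * (indicator E y * v y))"
    unfolding Rlam_def set_lebesgue_integral_def by (intro Bochner_Integration.integral_cong) auto
  then show ?thesis using True by simp
qed (simp add: kernel_def)

lemma ennreal_abs_Rlam_le:
  "ennreal \<bar>indicator E x * Rlam d0 d1 x0 x1 g \<phi> lam v x\<bar> \<le>
     (\<integral>\<^sup>+y. ennreal (kernel x y * \<bar>indicator E y * v y\<bar>) \<partial>lebesgue)"
proof (cases "integrable lebesgue (\<lambda>y. kernel x y * (indicator E y * v y))")
  case True
  then show ?thesis
    using integral_norm_bound_ennreal[OF True] kernel_nonneg[of x]
    by (simp add: Rlam_eq_kernel_integral abs_mult)
qed (simp add: Rlam_eq_kernel_integral not_integrable_integral_eq)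

lemma nn_integral_kernel_le: "(\<integral>\<^sup>+x. kernel x y \<partial>lebesgue) \<le> ennreal (1 / lam)"
proof (cases "y \<in> E")
  case True
  let ?k = "\<lambda>x. indicator (einterval (ereal y) d1) x * (exp (- lam * (G x - G y)) * (1 / g x))"
  have tail_subset: "einterval (ereal y) d1 \<subseteq> E"
    using True by (intro einterval_subset_einterval) (auto simp: einterval_iff)
  have k_nonneg: "0 \<le> ?k x" for x
  proof (cases "x \<in> einterval (ereal y) d1")
    case True
    then have "0 < g x" using tail_subset g_pos by auto
    then show ?thesis by simp
  qed simp
  have "kernel x y \<le> ?k x" for x
  proof (cases "x \<in> E \<and> y < x")
    case True
    then have "lam * (G x - G y) \<le> Q_lam x - Q_lam y"
      using \<open>y \<in> E\<close> by (intro lam_G_diff_le_Q_lam_diff) auto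
    then have "exp (- Q_lam x) * exp (Q_lam y) \<le> exp (- lam * (G x - G y))"
      by (simp flip: exp_add)
    moreover have "0 < g x" using True g_pos by auto
    ultimately show ?thesis
      using True \<open>y \<in> E\<close> by (auto simp: kernel_def einterval_iff divide_right_mono mult.commute)
  qed (use k_nonneg in \<open>auto simp: kernel_def\<close>)
  then have "(\<integral>\<^sup>+x. kernel x y \<partial>lebesgue) \<le> (\<integral>\<^sup>+x. ?k x \<partial>lborel)"
    by (auto simp: nn_integral_completion intro!: nn_integral_mono ennreal_leI)
  also have "\<dots> = ennreal (integral\<^sup>L lborel ?k)"
    using exp_G_integral_le(1)[OF True] k_nonneg by (intro nn_integral_eq_integral) (auto simp: set_integrable_def)
  also have "integral\<^sup>L lborel ?k = (LBINT x=ereal y..d1. exp (- lam * (G x - G y)) * (1 / g x))"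
    using True by (simp add: interval_lebesgue_integral_def set_lebesgue_integral_def einterval_iff less_imp_le)
  also have "ennreal \<dots> \<le> ennreal (1 / lam)"
    by (rule ennreal_leI[OF exp_G_integral_le(2)[OF True]])
  finally show ?thesis .
qed (simp add: kernel_def)

text \<open>Tonelli's theorem moves the column bound \<open>nn_integral_kernel_le\<close> onto the rows.\<close>

lemma Rlam_L1_bound:
  assumes "set_integrable lebesgue E v"
  shows "set_integrable lebesgue E (Rlam d0 d1 x0 x1 g \<phi> lam v)"
    "lam * (LINT x:E|lebesgue. \<bar>Rlam d0 d1 x0 x1 g \<phi> lam v x\<bar>) \<le> (LINT x:E|lebesgue. \<bar>v x\<bar>)"
proof -
  let ?R = "Rlam d0 d1 x0 x1 g \<phi> lam v" and ?v = "\<lambda>y. indicator E y * v y"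
  interpret pair_sigma_finite "lebesgue :: real measure" "lebesgue :: real measure"
    by (simp add: pair_sigma_finite_def sigma_finite_lebesgue)
  have v: "integrable lebesgue ?v" using assms by (simp add: set_integrable_def)
  then have [measurable]: "?v \<in> borel_measurable lebesgue" by auto
  have kernel_v: "(\<lambda>p. kernel (fst p) (snd p) * ?v (snd p)) \<in> borel_measurable (lebesgue \<Otimes>\<^sub>M lebesgue)"
    using kernel_measurable by measurable
  have kernel_abs_v: "(\<lambda>p. ennreal (kernel (fst p) (snd p) * \<bar>?v (snd p)\<bar>)) \<in> borel_measurable (lebesgue \<Otimes>\<^sub>M lebesgue)"
    using kernel_measurable by measurable
  have R_meas: "(\<lambda>x. indicator E x * ?R x) \<in> borel_measurable lebesgue"
    unfolding Rlam_eq_kernel_integral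
    by (rule M1.borel_measurable_lebesgue_integral) (use kernel_v in \<open>simp add: case_prod_beta'\<close>)
  have column: "(\<integral>\<^sup>+x. ennreal (kernel x y * \<bar>?v y\<bar>) \<partial>lebesgue) \<le> ennreal (\<bar>?v y\<bar> / lam)" for y
  proof -
    have "(\<integral>\<^sup>+x. ennreal (kernel x y * \<bar>?v y\<bar>) \<partial>lebesgue) = (\<integral>\<^sup>+x. kernel x y \<partial>lebesgue) * ennreal \<bar>?v y\<bar>"
      using kernel_nonneg measurable_Pair1[OF kernel_measurable, of y]
      by (simp add: ennreal_mult nn_integral_multc)
    also have "\<dots> \<le> ennreal (1 / lam) * ennreal \<bar>?v y\<bar>"
      by (rule mult_right_mono[OF nn_integral_kernel_le]) simp
    also have "\<dots> = ennreal (\<bar>?v y\<bar> / lam)"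
      using lam_pos by (simp add: ennreal_mult[symmetric])
    finally show ?thesis .
  qed
  have "(\<integral>\<^sup>+x. ennreal \<bar>indicator E x * ?R x\<bar> \<partial>lebesgue) \<le> (\<integral>\<^sup>+x. \<integral>\<^sup>+y. ennreal (kernel x y * \<bar>?v y\<bar>) \<partial>lebesgue \<partial>lebesgue)"
    by (intro nn_integral_mono ennreal_abs_Rlam_le)
  also have "\<dots> = (\<integral>\<^sup>+y. \<integral>\<^sup>+x. ennreal (kernel x y * \<bar>?v y\<bar>) \<partial>lebesgue \<partial>lebesgue)"
    by (rule Fubini'[symmetric]) (use kernel_abs_v in \<open>simp add: case_prod_beta'\<close>)
  also have "\<dots> \<le> (\<integral>\<^sup>+y. ennreal (\<bar>?v y\<bar> / lam) \<partial>lebesgue)"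
    by (intro nn_integral_mono column)
  also have "\<dots> = ennreal (LINT y|lebesgue. \<bar>?v y\<bar> / lam)"
    using v lam_pos by (intro nn_integral_eq_integral) auto
  finally have bound: "(\<integral>\<^sup>+x. ennreal \<bar>indicator E x * ?R x\<bar> \<partial>lebesgue) \<le> ennreal (LINT y|lebesgue. \<bar>?v y\<bar> / lam)" .
  then have R: "integrable lebesgue (\<lambda>x. indicator E x * ?R x)"
    by (intro integrableI_bounded[OF R_meas]) (simp add: le_less_trans)
  then show "set_integrable lebesgue E ?R" by (simp add: set_integrable_def)
  have "(LINT x|lebesgue. \<bar>indicator E x * ?R x\<bar>) \<le> (LINT y|lebesgue. \<bar>?v y\<bar> / lam)"
    using bound R lam_pos
    by (subst (asm) nn_integral_eq_integral) (auto intro: integral_nonneg_AE)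
  then show "lam * (LINT x:E|lebesgue. \<bar>?R x\<bar>) \<le> (LINT x:E|lebesgue. \<bar>v x\<bar>)"
    using lam_pos by (simp add: set_lebesgue_integral_def abs_mult field_simps)
qed

end

locale transport_resolvent_input = transport_resolvent +
  fixes v :: "real \<Rightarrow> real"
  assumes v_integrable: "set_integrable lebesgue (einterval d0 d1) v"
begin

abbreviation "R \<equiv> Rlam d0 d1 x0 x1 g \<phi> lam v"

text \<open>On \<open>E\<close> we have \<open>g R = exp (- Q_lam) F\<close> where \<open>F\<close> is the primitive of \<open>w = exp Q_lam v\<close> from \<open>d\<^sub>0\<close>;
  both factors are absolutely continuous and differentiable almost everywhere.\<close>

definition w :: "real \<Rightarrow> real" where "w y = exp (Q_lam y) * v y"
definition F :: "real \<Rightarrow> real" where "F x = (LINT y:einterval d0 (ereal x)|lebesgue. w y)"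

lemma w_set_integrable:
  assumes "S \<in> sets lebesgue" "S \<subseteq> E" "x \<in> E" "\<forall>y\<in>S. y \<le> x"
  shows "set_integrable lebesgue S w"
  unfolding set_integrable_def
proof (rule Bochner_Integration.integrable_bound)
  have v: "integrable lebesgue (\<lambda>y. indicator E y * v y)"
    using v_integrable by (simp add: set_integrable_def)
  then show "integrable lebesgue (\<lambda>y. exp (Q_lam x) * (indicator E y * v y))" by simp
  have "(\<lambda>y. indicator E y * exp (Q_lam y)) \<in> borel_measurable lebesgue"
    by (intro borel_measurable_indicator_E_times continuous_intros Q_lam_continuous)
  then have "(\<lambda>y. indicator S y * ((indicator E y * exp (Q_lam y)) * (indicator E y * v y))) \<in> borel_measurable lebesgue"
    using assms(1) v by measurable
  also have "(\<lambda>y. indicator S y * ((indicator E y * exp (Q_lam y)) * (indicator E y * v y))) = (\<lambda>y. indicator S y *\<^sub>R w y)"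
    using assms(2) by (intro ext) (auto simp: w_def indicator_def)
  finally show "(\<lambda>y. indicator S y *\<^sub>R w y) \<in> borel_measurable lebesgue" .
  have "norm (indicator S y *\<^sub>R w y) \<le> norm (exp (Q_lam x) * (indicator E y * v y))" for y
  proof (cases "y \<in> S")
    case True
    then have "y \<in> E" "Q_lam y \<le> Q_lam x" using assms Q_lam_mono by auto
    then show ?thesis using True by (auto simp: w_def abs_mult intro: mult_right_mono)
  qed simp
  then show "AE y in lebesgue. norm (indicator S y *\<^sub>R w y) \<le> norm (exp (Q_lam x) * (indicator E y * v y))"
    by simp
qed

lemma w_absolutely_integrable:
  assumes "a \<in> E" "b \<in> E"
  shows "w absolutely_integrable_on {a..b}"
  by (rule w_set_integrable[OF _ atLeastAtMost_subset_einterval[OF assms] assms(2)]) auto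

lemma F_diff:
  assumes a: "a \<in> E" and u: "u \<in> E" and "a \<le> u"
  shows "F u - F a = integral {a..u} w"
proof -
  have left_subset: "einterval d0 (ereal a) \<subseteq> E"
    using a by (intro einterval_subset_einterval) (auto simp: einterval_iff)
  have left: "set_integrable lebesgue (einterval d0 (ereal a)) w"
    by (rule w_set_integrable[OF _ left_subset a]) (auto simp: einterval_iff)
  have right_subset: "{a..<u} \<subseteq> E" using atLeastAtMost_subset_einterval[OF a u] by auto
  have right: "set_integrable lebesgue {a..<u} w"
    by (rule w_set_integrable[OF _ right_subset u]) auto
  have "d0 < ereal a" using a by (simp add: einterval_iff)
  have split: "indicator (einterval d0 (ereal u)) y *\<^sub>R w y =
      indicator (einterval d0 (ereal a)) y *\<^sub>R w y + indicator {a..<u} y *\<^sub>R w y" for y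
  proof (cases "y < a")
    case False
    then have "d0 < ereal y" using \<open>d0 < ereal a\<close> by (meson ereal_less_eq(3) not_less order.strict_trans2)
    then show ?thesis using False by (auto simp: indicator_def einterval_iff)
  qed (use \<open>a \<le> u\<close> in \<open>auto simp: indicator_def einterval_iff\<close>)
  have "F u = F a + (LINT y:{a..<u}|lebesgue. w y)"
    using left right unfolding F_def set_lebesgue_integral_def set_integrable_def split
    by (simp add: Bochner_Integration.integral_add)
  moreover have "(LINT y:{a..<u}|lebesgue. w y) = integral {a..<u} w"
    by (rule set_lebesgue_integral_eq_integral(2)[OF right])
  moreover have "integral {a..<u} w = integral {a..u} w"
    by (rule integral_spike_set) (auto intro: negligible_subset[of "{u}"])
  ultimately show ?thesis by simp
qed

lemma F_continuous: "continuous_on E F"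
  by (rule continuous_on_einterval_if_integral[OF _ F_diff])
    (auto intro: set_lebesgue_integral_eq_integral(1)[OF w_absolutely_integrable])

lemma g_times_R: "x \<in> E \<Longrightarrow> g x * R x = exp (- Q_lam x) * F x"
proof -
  assume x: "x \<in> E"
  then have "einterval d0 (ereal x) \<subseteq> E"
    by (intro einterval_subset_einterval) (auto simp: einterval_iff)
  then have "R x = (LINT y|lebesgue. exp (- Q_lam x) / g x * (indicator (einterval d0 (ereal x)) y *\<^sub>R w y))"
    unfolding Rlam_def set_lebesgue_integral_def
    by (intro Bochner_Integration.integral_cong) (auto simp: indicator_def w_def exp_diff exp_minus field_simps)
  then show ?thesis
    using g_nonzero[OF x] by (simp add: F_def set_lebesgue_integral_def)
qed

lemma g_times_R_has_derivative_ae: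
  "AE x in lebesgue. x \<in> E \<longrightarrow>
     ((\<lambda>y. g y * R y) has_real_derivative (v x - lam * R x - \<phi> x * R x)) (at x)"
proof -
  obtain N1 where "negligible N1" and F': "\<And>x. x \<in> E - N1 \<Longrightarrow> (F has_real_derivative w x) (at x)"
    using has_real_derivative_ae_einterval[OF d0_less_d1 w_absolutely_integrable F_diff] by blast
  obtain N2 where "negligible N2" and Q': "\<And>x. x \<in> E - N2 \<Longrightarrow> (Q_lam has_real_derivative Q_lam_density x) (at x)"
    using has_real_derivative_ae_einterval[OF d0_less_d1
        set_integrable_lborel_imp_absolutely_integrable[OF integrable_Q_lam_density] Q_lam_diff] by blast
  have null: "N1 \<union> N2 \<in> null_sets lebesgue"
    using \<open>negligible N1\<close> \<open>negligible N2\<close> negligible_iff_null_sets by auto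
  have deriv: "((\<lambda>y. g y * R y) has_real_derivative (v x - lam * R x - \<phi> x * R x)) (at x)"
    if x: "x \<in> E" "x \<notin> N1 \<union> N2" for x
  proof -
    have "((\<lambda>y. exp (- Q_lam y) * F y) has_real_derivative
        exp (- Q_lam x) * (- Q_lam_density x) * F x + w x * exp (- Q_lam x)) (at x)"
      using x by (intro DERIV_mult DERIV_chain2[OF DERIV_exp] DERIV_minus Q' F') auto
    also have "exp (- Q_lam x) * (- Q_lam_density x) * F x = - Q_lam_density x * (g x * R x)"
      using g_times_R[OF x(1)] by simp
    also have "- Q_lam_density x * (g x * R x) + w x * exp (- Q_lam x) = v x - lam * R x - \<phi> x * R x"
      using g_nonzero[OF x(1)] by (simp add: Q_lam_density_def w_def exp_minus field_simps)
    finally show ?thesis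
      by (rule has_field_derivative_transform_within_open[OF _ open_einterval x(1)]) (simp add: g_times_R)
  qed
  show ?thesis
    by (rule AE_I'[OF null]) (use deriv in auto)
qed

lemma g_times_R_abs_cont: "AC_on E (\<lambda>x. g x * R x)"
  unfolding AC_on_def
proof (intro allI impI)
  fix a b assume a: "a \<in> E" and b: "b \<in> E" and "a \<le> b"
  have ab: "{a..b} \<subseteq> E" by (rule atLeastAtMost_subset_einterval[OF a b])
  have F: "abs_cont_on_interval a b F"
    using ab by (intro abs_cont_on_interval_integral[OF w_absolutely_integrable[OF a b]] F_diff) auto
  have Q: "abs_cont_on_interval a b Q_lam"
    using ab by (intro abs_cont_on_interval_integral[OF set_integrable_lborel_imp_absolutely_integrable[OF integrable_Q_lam_density[OF a b]]]
        Q_lam_diff) auto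
  have Q_ge: "- Q_lam x \<le> - Q_lam a" if "x \<in> {a..b}" for x
    using Q_lam_mono[OF a] ab that by auto
  have exp_Q: "abs_cont_on_interval a b (\<lambda>x. exp (- Q_lam x))"
  proof (rule abs_cont_on_interval_Lipschitz_image[OF Q, of "exp (- Q_lam a)"])
    fix s t assume "s \<in> {a..b}" "t \<in> {a..b}"
    then show "\<bar>exp (- Q_lam t) - exp (- Q_lam s)\<bar> \<le> exp (- Q_lam a) * \<bar>Q_lam t - Q_lam s\<bar>"
      using exp_diff_le_Lipschitz[OF Q_ge Q_ge] by (simp add: abs_minus_commute)
  qed simp
  obtain C where C: "\<forall>y\<in>F ` {a..b}. norm y \<le> C"
    using compact_continuous_image[OF continuous_on_subset[OF F_continuous ab]]
    by (metis compact_Icc compact_imp_bounded bounded_iff)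
  have "abs_cont_on_interval a b (\<lambda>x. exp (- Q_lam x) * F x)"
  proof (rule abs_cont_on_interval_mult[OF exp_Q F \<open>a \<le> b\<close>, of "max (exp (- Q_lam a)) C"])
    fix x assume x: "x \<in> {a..b}"
    have "exp (- Q_lam x) \<le> exp (- Q_lam a)" using Q_ge[OF x] by simp
    moreover have "\<bar>F x\<bar> \<le> C" using C x by auto
    ultimately show "\<bar>exp (- Q_lam x)\<bar> \<le> max (exp (- Q_lam a)) C \<and> \<bar>F x\<bar> \<le> max (exp (- Q_lam a)) C"
      by (simp add: le_max_iff_disj del: exp_le_cancel_iff)
  qed
  then show "abs_cont_on_interval a b (\<lambda>x. g x * R x)"
    by (rule abs_cont_on_interval_cong) (use ab g_times_R in auto)
qed

end

theorem lemma4p3: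
  fixes d0 d1 :: ereal and g \<phi> :: "real \<Rightarrow> real" and x0 x1 lam :: real
  defines "E \<equiv> einterval d0 d1"
  defines "R \<equiv> Rlam d0 d1 x0 x1 g \<phi> lam"
  assumes "d0 < d1"
    and "continuous_on E g" and "\<forall>x\<in>E. 0 < g x"
    and "\<phi> \<in> borel_measurable borel" and "\<forall>x\<in>E. 0 \<le> \<phi> x"
    and "\<forall>K. compact K \<and> K \<subseteq> E \<longrightarrow> set_integrable lborel K \<phi>"
    and "x0 \<in> E" and "x1 \<in> E"
    and "0 < lam"
  shows "\<forall>v. set_integrable lebesgue E v \<longrightarrow>
           set_integrable lebesgue E (R v) \<and>
           lam * (LINT x:E|lebesgue. \<bar>R v x\<bar>) \<le> (LINT x:E|lebesgue. \<bar>v x\<bar>) \<and>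
           AC_on E (\<lambda>x. g x * R v x) \<and>
           (AE x in lebesgue. x \<in> E \<longrightarrow>
              ((\<lambda>y. g y * R v y) has_real_derivative (v x - lam * R v x - \<phi> x * R v x)) (at x))"
proof (intro allI impI conjI)
  fix v :: "real \<Rightarrow> real" assume v: "set_integrable lebesgue E v"
  interpret transport_resolvent_input d0 d1 g \<phi> x0 x1 lam v
    using assms v unfolding E_def by unfold_locales auto
  show "set_integrable lebesgue E (R v)"
    using Rlam_L1_bound(1)[OF v_integrable] unfolding E_def R_def .
  show "lam * (LINT x:E|lebesgue. \<bar>R v x\<bar>) \<le> (LINT x:E|lebesgue. \<bar>v x\<bar>)"
    using Rlam_L1_bound(2)[OF v_integrable] unfolding E_def R_def .
  show "AC_on E (\<lambda>x. g x * R v x)"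
    using g_times_R_abs_cont unfolding E_def R_def .
  show "AE x in lebesgue. x \<in> E \<longrightarrow>
      ((\<lambda>y. g y * R v y) has_real_derivative (v x - lam * R v x - \<phi> x * R v x)) (at x)"
    using g_times_R_has_derivative_ae unfolding E_def R_def .
qed

end
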